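(* Let $\alpha_1,\dots,\alpha_4$ be constants, $H=H(t,t^-,q,q^-,p,p^-)$ smooth, and $X=\xi\partial_t+\eta\partial_q+\nu\partial_p$ (coefficients functions of $(t,q,p)$) such that $\Omega=0$. Let $C$ and $P$ be as defined below. If, on the solutions of the local extremal equation $F_H=\xi\frac{\delta\tilde H}{\delta t}+\eta\frac{\delta\tilde H}{\delta q}+\nu\frac{\delta\tilde H}{\delta p}=0$, one has $D(C)=(S_+-1)W$ for some function $W(t,t^-,q,q^-,p,p^-,\dot q,\dot q^-,\dot p,\dot p^-)$, then $J=P-W$ is a difference first integral, i.e. $(S_+-1)J=0$ on the solutions of $F_H=0$.
   Context: Constant delay $\tau>0$; $t^\pm=t\pm\tau$, $f^\pm=f(t\pm\tau)$; scalar $q,p$. $S_\pm$ are the forward/backward shift operators on expressions; $\xi^\pm=S_\pm(\xi)$ etc.; $H^+=S_+(H)$. $D$ is the total derivative acting on variables at $t^-,t,t^+$. $\tilde H=p^{-}(\alpha_{1}\dot{q}+\alpha_{2}\dot{q}^{-})+p(\alpha_{3}\dot{q}+\alpha_{4}\dot{q}^{-})-H$; $\frac{\delta\tilde H}{\delta p}=\alpha_1\dot q^++(\alpha_2+\alpha_3)\dot q+\alpha_4\dot q^--\partial_p(H+H^+)$, $\frac{\delta\tilde H}{\delta q}=-\big(\alpha_4\dot p^++(\alpha_2+\alpha_3)\dot p+\alpha_1\dot p^-+\partial_q(H+H^+)\big)$, $\frac{\delta\tilde H}{\delta t}=D[\alpha_2(p\dot q-p^-\dot q^-)+\alpha_4(p^+\dot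 q-p\dot q^-)]+D(H)-\partial_t(H+H^+)$. $\Omega=\nu^{-}(\alpha_{1}\dot{q}+\alpha_{2}\dot{q}^{-})+p^{-}(\alpha_{1}D(\eta)+\alpha_{2}D(\eta^{-}))+\nu(\alpha_{3}\dot{q}+\alpha_{4}\dot{q}^{-})+p(\alpha_{3}D(\eta)+\alpha_{4}D(\eta^{-}))+(\alpha_{2}p^{-}+\alpha_{4}p)\dot{q}^{-}D(\xi-\xi^{-})-\xi H_t-\eta H_q-\nu H_p-\xi^{-}H_{t^-}-\eta^{-}H_{q^-}-\nu^{-}H_{p^-}-HD(\xi)$. $C=\eta(\alpha_{4}p^{+}+(\alpha_{2}+\alpha_{3})p+\alpha_{1}p^{-})-\xi\big(\alpha_{2}(p\dot{q}-p^{-}\dot{q}^{-})+\alpha_{4}(p^{+}\dot{q}-p\dot{q}^{-})+H\big)$, $P=(\alpha_{2}p^{-}+\alpha_{4}p)D(\eta^{-})+\nu^{-}(\alpha_{1}\dot{q}+\alpha_{2}\dot{q}^{-})-(\alpha_{2}p^{-}+\alpha_{4}p)\dot{q}^{-}D(\xi^{-})-\xi^{-}H_{t^-}-\eta^{-}H_{q^-}-\nu^{-}H_{p^-}$. Equations are considered with $t^+-t=t-t^-=\tau$. *)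

theory Defs
  imports "HOL-Analysis.Analysis"
begin

definition smooth_fun :: "(real \<Rightarrow> real) \<Rightarrow> bool" where
  "smooth_fun f \<longleftrightarrow> (\<forall>n x. (deriv ^^ n) f differentiable (at x))"

type_synonym ham = "real \<Rightarrow> real \<Rightarrow> real \<Rightarrow> real \<Rightarrow> real \<Rightarrow> real \<Rightarrow> real"
type_synonym coef = "real \<Rightarrow> real \<Rightarrow> real \<Rightarrow> real"

definition H_t :: "ham \<Rightarrow> ham" where
  "H_t H a b c d e f = deriv (\<lambda>x. H x b c d e f) a"
definition H_tm :: "ham \<Rightarrow> ham" where
  "H_tm H a b c d e f = deriv (\<lambda>x. H a x c d e f) b"
definition H_q :: "ham \<Rightarrow> ham" where
  "H_q H a b c d e f = deriv (\<lambda>x. H a b x d e f) c"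
definition H_qm :: "ham \<Rightarrow> ham" where
  "H_qm H a b c d e f = deriv (\<lambda>x. H a b c x e f) d"
definition H_p :: "ham \<Rightarrow> ham" where
  "H_p H a b c d e f = deriv (\<lambda>x. H a b c d x f) e"
definition H_pm :: "ham \<Rightarrow> ham" where
  "H_pm H a b c d e f = deriv (\<lambda>x. H a b c d e x) f"

definition along :: "real \<Rightarrow> ham \<Rightarrow> (real \<Rightarrow> real) \<Rightarrow> (real \<Rightarrow> real) \<Rightarrow> real \<Rightarrow> real" where
  "along \<tau> G q p t = G t (t - \<tau>) (q t) (q (t - \<tau>)) (p t) (p (t - \<tau>))"

definition alongc :: "coef \<Rightarrow> (real \<Rightarrow> real) \<Rightarrow> (real \<Rightarrow> real) \<Rightarrow> real \<Rightarrow> real" where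
  "alongc g q p t = g t (q t) (p t)"

definition Omega ::
  "real \<Rightarrow> real \<Rightarrow> real \<Rightarrow> real \<Rightarrow> real \<Rightarrow> ham \<Rightarrow> coef \<Rightarrow> coef \<Rightarrow> coef
   \<Rightarrow> (real \<Rightarrow> real) \<Rightarrow> (real \<Rightarrow> real) \<Rightarrow> real \<Rightarrow> real" where
  "Omega \<tau> \<alpha>1 \<alpha>2 \<alpha>3 \<alpha>4 H \<xi> \<eta> \<nu> q p t =
    (let tm = t - \<tau>;
         X = alongc \<xi> q p; E = alongc \<eta> q p; N = alongc \<nu> q p;
         qd = deriv q
     in N tm * (\<alpha>1 * qd t + \<alpha>2 * qd tm)
        + p tm * (\<alpha>1 * deriv E t + \<alpha>2 * deriv (\<lambda>s. E (s - \<tau>)) t)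
        + N t * (\<alpha>3 * qd t + \<alpha>4 * qd tm)
        + p t * (\<alpha>3 * deriv E t + \<alpha>4 * deriv (\<lambda>s. E (s - \<tau>)) t)
        + (\<alpha>2 * p tm + \<alpha>4 * p t) * qd tm * deriv (\<lambda>s. X s - X (s - \<tau>)) t
        - X t * along \<tau> (H_t H) q p t - E t * along \<tau> (H_q H) q p t
        - N t * along \<tau> (H_p H) q p t
        - X tm * along \<tau> (H_tm H) q p t - E tm * along \<tau> (H_qm H) q p t
        - N tm * along \<tau> (H_pm H) q p t
        - along \<tau> H q p t * deriv X t)"

text \<open>Variational derivatives of tilde H along a trajectory.  Here H^+ = S_+(H), so e.g.
  the partial derivative of H^+ with respect to p is the shifted derivative of H with respect
  to its p^- slot.\<close>
definition var_p ::
  "real \<Rightarrow> real \<Rightarrow> real \<Rightarrow> real \<Rightarrow> real \<Rightarrow> ham \<Rightarrow> (real \<Rightarrow> real) \<Rightarrow> (real \<Rightarrow> real) \<Rightarrow> real \<Rightarrow> real" where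
  "var_p \<tau> \<alpha>1 \<alpha>2 \<alpha>3 \<alpha>4 H q p t =
     \<alpha>1 * deriv q (t + \<tau>) + (\<alpha>2 + \<alpha>3) * deriv q t + \<alpha>4 * deriv q (t - \<tau>)
     - (along \<tau> (H_p H) q p t + along \<tau> (H_pm H) q p (t + \<tau>))"

definition var_q ::
  "real \<Rightarrow> real \<Rightarrow> real \<Rightarrow> real \<Rightarrow> real \<Rightarrow> ham \<Rightarrow> (real \<Rightarrow> real) \<Rightarrow> (real \<Rightarrow> real) \<Rightarrow> real \<Rightarrow> real" where
  "var_q \<tau> \<alpha>1 \<alpha>2 \<alpha>3 \<alpha>4 H q p t =
     - (\<alpha>4 * deriv p (t + \<tau>) + (\<alpha>2 + \<alpha>3) * deriv p t + \<alpha>1 * deriv p (t - \<tau>)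
        + along \<tau> (H_q H) q p t + along \<tau> (H_qm H) q p (t + \<tau>))"

definition var_t ::
  "real \<Rightarrow> real \<Rightarrow> real \<Rightarrow> real \<Rightarrow> real \<Rightarrow> ham \<Rightarrow> (real \<Rightarrow> real) \<Rightarrow> (real \<Rightarrow> real) \<Rightarrow> real \<Rightarrow> real" where
  "var_t \<tau> \<alpha>1 \<alpha>2 \<alpha>3 \<alpha>4 H q p t =
     deriv (\<lambda>s. \<alpha>2 * (p s * deriv q s - p (s - \<tau>) * deriv q (s - \<tau>))
              + \<alpha>4 * (p (s + \<tau>) * deriv q s - p s * deriv q (s - \<tau>))) t
     + deriv (along \<tau> H q p) t
     - (along \<tau> (H_t H) q p t + along \<tau> (H_tm H) q p (t + \<tau>))"

definition F_H ::
  "real \<Rightarrow> real \<Rightarrow> real \<Rightarrow> real \<Rightarrow> real \<Rightarrow> ham \<Rightarrow> coef \<Rightarrow> coef \<Rightarrow> coef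
   \<Rightarrow> (real \<Rightarrow> real) \<Rightarrow> (real \<Rightarrow> real) \<Rightarrow> real \<Rightarrow> real" where
  "F_H \<tau> \<alpha>1 \<alpha>2 \<alpha>3 \<alpha>4 H \<xi> \<eta> \<nu> q p t =
     alongc \<xi> q p t * var_t \<tau> \<alpha>1 \<alpha>2 \<alpha>3 \<alpha>4 H q p t
     + alongc \<eta> q p t * var_q \<tau> \<alpha>1 \<alpha>2 \<alpha>3 \<alpha>4 H q p t
     + alongc \<nu> q p t * var_p \<tau> \<alpha>1 \<alpha>2 \<alpha>3 \<alpha>4 H q p t"

definition C_expr ::
  "real \<Rightarrow> real \<Rightarrow> real \<Rightarrow> real \<Rightarrow> real \<Rightarrow> ham \<Rightarrow> coef \<Rightarrow> coef \<Rightarrow> coef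
   \<Rightarrow> (real \<Rightarrow> real) \<Rightarrow> (real \<Rightarrow> real) \<Rightarrow> real \<Rightarrow> real" where
  "C_expr \<tau> \<alpha>1 \<alpha>2 \<alpha>3 \<alpha>4 H \<xi> \<eta> \<nu> q p t =
     alongc \<eta> q p t * (\<alpha>4 * p (t + \<tau>) + (\<alpha>2 + \<alpha>3) * p t + \<alpha>1 * p (t - \<tau>))
     - alongc \<xi> q p t * (\<alpha>2 * (p t * deriv q t - p (t - \<tau>) * deriv q (t - \<tau>))
                         + \<alpha>4 * (p (t + \<tau>) * deriv q t - p t * deriv q (t - \<tau>))
                         + along \<tau> H q p t)"

definition P_expr ::
  "real \<Rightarrow> real \<Rightarrow> real \<Rightarrow> real \<Rightarrow> real \<Rightarrow> ham \<Rightarrow> coef \<Rightarrow> coef \<Rightarrow> coef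
   \<Rightarrow> (real \<Rightarrow> real) \<Rightarrow> (real \<Rightarrow> real) \<Rightarrow> real \<Rightarrow> real" where
  "P_expr \<tau> \<alpha>1 \<alpha>2 \<alpha>3 \<alpha>4 H \<xi> \<eta> \<nu> q p t =
    (let tm = t - \<tau>;
         X = alongc \<xi> q p; E = alongc \<eta> q p; N = alongc \<nu> q p;
         qd = deriv q
     in (\<alpha>2 * p tm + \<alpha>4 * p t) * deriv (\<lambda>s. E (s - \<tau>)) t
        + N tm * (\<alpha>1 * qd t + \<alpha>2 * qd tm)
        - (\<alpha>2 * p tm + \<alpha>4 * p t) * qd tm * deriv (\<lambda>s. X (s - \<tau>)) t
        - X tm * along \<tau> (H_tm H) q p t - E tm * along \<tau> (H_qm H) q p t
        - N tm * along \<tau> (H_pm H) q p t)"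

definition W_along ::
  "real \<Rightarrow> (real \<Rightarrow> real \<Rightarrow> real \<Rightarrow> real \<Rightarrow> real \<Rightarrow> real \<Rightarrow> real \<Rightarrow> real \<Rightarrow> real \<Rightarrow> real \<Rightarrow> real)
   \<Rightarrow> (real \<Rightarrow> real) \<Rightarrow> (real \<Rightarrow> real) \<Rightarrow> real \<Rightarrow> real" where
  "W_along \<tau> W q p t = W t (t - \<tau>) (q t) (q (t - \<tau>)) (p t) (p (t - \<tau>))
                          (deriv q t) (deriv q (t - \<tau>)) (deriv p t) (deriv p (t - \<tau>))"

end

theory Submission
  imports Defs
begin

text \<open>Along every trajectory with differentiable q, \<open>q'\<close> and p one has the identity
  \<open>(S\<^sub>+ - 1) P = F\<^sub>H + D(C) - \<Omega>\<close>: expand \<open>D(C)\<close> by the product rule and use that the total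
  derivative commutes with the delay shift, after which both sides agree as polynomials in the
  values and derivatives at \<open>t\<^sup>-, t, t\<^sup>+\<close>.  On solutions of \<open>F\<^sub>H = 0\<close> with \<open>\<Omega> = 0\<close> this gives
  \<open>(S\<^sub>+ - 1) P = D(C) = (S\<^sub>+ - 1) W\<close>.\<close>

lemma smooth_fun_differentiable: "smooth_fun f \<Longrightarrow> f differentiable (at x)"
  unfolding smooth_fun_def by (metis funpow_0)

lemma smooth_fun_deriv: "smooth_fun f \<Longrightarrow> smooth_fun (deriv f)"
  unfolding smooth_fun_def by (metis funpow_Suc_right o_apply)

lemma has_field_derivative_shift:
  fixes f :: "real \<Rightarrow> real"
  assumes "f differentiable (at (x + c))"
  shows "((\<lambda>s. f (s + c)) has_field_derivative deriv f (x + c)) (at x)"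
  using assms by (metis DERIV_deriv_iff_real_differentiable DERIV_shift)

lemma differentiable_shift:
  fixes f :: "real \<Rightarrow> real"
  assumes "f differentiable (at (x + c))"
  shows "(\<lambda>s. f (s + c)) differentiable (at x)"
  using has_field_derivative_shift[OF assms] real_differentiable_def by blast

lemma deriv_shift:
  fixes f :: "real \<Rightarrow> real"
  assumes "f differentiable (at (x + c))"
  shows "deriv (\<lambda>s. f (s + c)) x = deriv f (x + c)"
  using has_field_derivative_shift[OF assms] by (rule DERIV_imp_deriv)

lemma alongc_differentiable:
  assumes g: "\<And>z. (\<lambda>(a, b, c). g a b c) differentiable (at z)"
    and "q differentiable (at t)" and "p differentiable (at t)"
  shows "alongc g q p differentiable (at t)"
proof -
  have "(\<lambda>s. (s, q s, p s)) differentiable (at t)"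
    using assms(2,3) by (intro derivative_intros)
  from differentiable_chain_at[OF this g] show ?thesis
    by (simp add: alongc_def[abs_def] o_def)
qed

lemma along_differentiable:
  assumes H: "\<And>z. (\<lambda>(a, b, c, d, e, f). H a b c d e f) differentiable (at z)"
    and q: "\<And>s. q differentiable (at s)" and p: "\<And>s. p differentiable (at s)"
  shows "along \<tau> H q p differentiable (at t)"
proof -
  have "(\<lambda>s. q (s - \<tau>)) differentiable (at t)" "(\<lambda>s. p (s - \<tau>)) differentiable (at t)"
    using differentiable_shift[of q t "-\<tau>"] differentiable_shift[of p t "-\<tau>"] q p by auto
  then have "(\<lambda>s. (s, s - \<tau>, q s, q (s - \<tau>), p s, p (s - \<tau>))) differentiable (at t)"
    using q p by (intro derivative_intros)
  from differentiable_chain_at[OF this H] show ?thesis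
    by (simp add: along_def[abs_def] o_def)
qed

lemma deriv_C_expr:
  fixes q p :: "real \<Rightarrow> real" and \<tau> \<alpha>2 \<alpha>4 :: real
  assumes H: "\<And>z. (\<lambda>(a, b, c, d, e, f). H a b c d e f) differentiable (at z)"
    and \<xi>: "\<And>z. (\<lambda>(a, b, c). \<xi> a b c) differentiable (at z)"
    and \<eta>: "\<And>z. (\<lambda>(a, b, c). \<eta> a b c) differentiable (at z)"
    and q: "\<And>s. q differentiable (at s)" and q': "\<And>s. deriv q differentiable (at s)"
    and p: "\<And>s. p differentiable (at s)"
  defines "X \<equiv> alongc \<xi> q p" and "E \<equiv> alongc \<eta> q p" and "Hal \<equiv> along \<tau> H q p"
    and "B \<equiv> \<lambda>s. \<alpha>2 * (p s * deriv q s - p (s - \<tau>) * deriv q (s - \<tau>))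
                 + \<alpha>4 * (p (s + \<tau>) * deriv q s - p s * deriv q (s - \<tau>))"
  shows "deriv (C_expr \<tau> \<alpha>1 \<alpha>2 \<alpha>3 \<alpha>4 H \<xi> \<eta> \<nu> q p) t
    = deriv E t * (\<alpha>4 * p (t + \<tau>) + (\<alpha>2 + \<alpha>3) * p t + \<alpha>1 * p (t - \<tau>))
      + E t * (\<alpha>4 * deriv p (t + \<tau>) + (\<alpha>2 + \<alpha>3) * deriv p t + \<alpha>1 * deriv p (t - \<tau>))
      - (deriv X t * (B t + Hal t) + X t * (deriv B t + deriv Hal t))"
proof -
  have "X differentiable (at t)" "E differentiable (at t)"
    using alongc_differentiable[OF \<xi> q p] alongc_differentiable[OF \<eta> q p] by (auto simp: X_def E_def)
  moreover have "Hal differentiable (at t)"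
    using along_differentiable[OF H q p] by (simp add: Hal_def)
  moreover have "B differentiable (at t)"
    unfolding B_def using q q' p differentiable_shift[of "deriv q" t "-\<tau>"]
      differentiable_shift[of p t "\<tau>"] differentiable_shift[of p t "-\<tau>"]
    by (intro derivative_intros) auto
  moreover have "C_expr \<tau> \<alpha>1 \<alpha>2 \<alpha>3 \<alpha>4 H \<xi> \<eta> \<nu> q p
      = (\<lambda>s. E s * (\<alpha>4 * p (s + \<tau>) + (\<alpha>2 + \<alpha>3) * p s + \<alpha>1 * p (s - \<tau>)) - X s * (B s + Hal s))"
    by (auto simp: C_expr_def E_def X_def B_def Hal_def)
  ultimately show ?thesis
    using p has_field_derivative_shift[of p t "\<tau>"] has_field_derivative_shift[of p t "-\<tau>"]
    by (auto intro!: DERIV_imp_deriv derivative_eq_intros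
        simp: DERIV_deriv_iff_real_differentiable[symmetric])
qed

lemma P_expr_shift_difference:
  fixes q p :: "real \<Rightarrow> real"
  assumes H: "\<And>z. (\<lambda>(a, b, c, d, e, f). H a b c d e f) differentiable (at z)"
    and \<xi>: "\<And>z. (\<lambda>(a, b, c). \<xi> a b c) differentiable (at z)"
    and \<eta>: "\<And>z. (\<lambda>(a, b, c). \<eta> a b c) differentiable (at z)"
    and q: "\<And>s. q differentiable (at s)" and q': "\<And>s. deriv q differentiable (at s)"
    and p: "\<And>s. p differentiable (at s)"
  shows "P_expr \<tau> \<alpha>1 \<alpha>2 \<alpha>3 \<alpha>4 H \<xi> \<eta> \<nu> q p (t + \<tau>) - P_expr \<tau> \<alpha>1 \<alpha>2 \<alpha>3 \<alpha>4 H \<xi> \<eta> \<nu> q p t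
    = F_H \<tau> \<alpha>1 \<alpha>2 \<alpha>3 \<alpha>4 H \<xi> \<eta> \<nu> q p t + deriv (C_expr \<tau> \<alpha>1 \<alpha>2 \<alpha>3 \<alpha>4 H \<xi> \<eta> \<nu> q p) t
      - Omega \<tau> \<alpha>1 \<alpha>2 \<alpha>3 \<alpha>4 H \<xi> \<eta> \<nu> q p t"
proof -
  define X where "X = alongc \<xi> q p"
  define E where "E = alongc \<eta> q p"
  have X_diff: "\<And>s. X differentiable (at s)" and E_diff: "\<And>s. E differentiable (at s)"
    using alongc_differentiable[OF \<xi> q p] alongc_differentiable[OF \<eta> q p] by (auto simp: X_def E_def)
  have deriv_delay: "deriv (\<lambda>s. f (s - \<tau>)) s = deriv f (s - \<tau>)"
    if "\<And>s. f differentiable (at s)" for f s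
    using deriv_shift[of f s "-\<tau>"] that by simp
  have X_jump: "deriv (\<lambda>s. X s - X (s - \<tau>)) t = deriv X t - deriv X (t - \<tau>)"
    using X_diff has_field_derivative_shift[of X t "-\<tau>"]
    by (intro DERIV_imp_deriv) (auto intro!: derivative_eq_intros simp: DERIV_deriv_iff_real_differentiable)
  show ?thesis
    unfolding deriv_C_expr[OF H \<xi> \<eta> q q' p] Omega_def F_H_def var_t_def var_q_def var_p_def P_expr_def Let_def
      X_def[symmetric] E_def[symmetric] deriv_delay[OF X_diff] deriv_delay[OF E_diff] X_jump
    by (simp add: algebra_simps)
qed

theorem proposition2:
  fixes \<tau> \<alpha>1 \<alpha>2 \<alpha>3 \<alpha>4 :: real
    and H :: "real \<Rightarrow> real \<Rightarrow> real \<Rightarrow> real \<Rightarrow> real \<Rightarrow> real \<Rightarrow> real"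
    and \<xi> \<eta> \<nu> :: "real \<Rightarrow> real \<Rightarrow> real \<Rightarrow> real"
    and W :: "real \<Rightarrow> real \<Rightarrow> real \<Rightarrow> real \<Rightarrow> real \<Rightarrow> real \<Rightarrow> real \<Rightarrow> real \<Rightarrow> real \<Rightarrow> real \<Rightarrow> real"
  assumes tau_pos: "\<tau> > 0"
    and H_diff: "\<And>x. (\<lambda>(a, b, c, d, e, f). H a b c d e f) differentiable (at x)"
    and xi_diff: "\<And>x. (\<lambda>(a, b, c). \<xi> a b c) differentiable (at x)"
    and eta_diff: "\<And>x. (\<lambda>(a, b, c). \<eta> a b c) differentiable (at x)"
    and nu_diff: "\<And>x. (\<lambda>(a, b, c). \<nu> a b c) differentiable (at x)"
    and Omega_zero: "\<And>q p t. smooth_fun q \<Longrightarrow> smooth_fun p \<Longrightarrow>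
                       Omega \<tau> \<alpha>1 \<alpha>2 \<alpha>3 \<alpha>4 H \<xi> \<eta> \<nu> q p t = 0"
    and DC_W: "\<And>q p t. smooth_fun q \<Longrightarrow> smooth_fun p \<Longrightarrow>
                 (\<forall>s. F_H \<tau> \<alpha>1 \<alpha>2 \<alpha>3 \<alpha>4 H \<xi> \<eta> \<nu> q p s = 0) \<Longrightarrow>
                 deriv (C_expr \<tau> \<alpha>1 \<alpha>2 \<alpha>3 \<alpha>4 H \<xi> \<eta> \<nu> q p) t
                   = W_along \<tau> W q p (t + \<tau>) - W_along \<tau> W q p t"
  shows "\<And>q p t. smooth_fun q \<Longrightarrow> smooth_fun p \<Longrightarrow>
           (\<forall>s. F_H \<tau> \<alpha>1 \<alpha>2 \<alpha>3 \<alpha>4 H \<xi> \<eta> \<nu> q p s = 0) \<Longrightarrow>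
           (P_expr \<tau> \<alpha>1 \<alpha>2 \<alpha>3 \<alpha>4 H \<xi> \<eta> \<nu> q p (t + \<tau>) - W_along \<tau> W q p (t + \<tau>))
           - (P_expr \<tau> \<alpha>1 \<alpha>2 \<alpha>3 \<alpha>4 H \<xi> \<eta> \<nu> q p t - W_along \<tau> W q p t) = 0"
proof -
  fix q p t
  assume q: "smooth_fun q" and p: "smooth_fun p"
    and extremal: "\<forall>s. F_H \<tau> \<alpha>1 \<alpha>2 \<alpha>3 \<alpha>4 H \<xi> \<eta> \<nu> q p s = 0"
  have "P_expr \<tau> \<alpha>1 \<alpha>2 \<alpha>3 \<alpha>4 H \<xi> \<eta> \<nu> q p (t + \<tau>) - P_expr \<tau> \<alpha>1 \<alpha>2 \<alpha>3 \<alpha>4 H \<xi> \<eta> \<nu> q p t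
      = deriv (C_expr \<tau> \<alpha>1 \<alpha>2 \<alpha>3 \<alpha>4 H \<xi> \<eta> \<nu> q p) t"
    using P_expr_shift_difference[OF H_diff xi_diff eta_diff] q p extremal Omega_zero
    by (simp add: smooth_fun_differentiable smooth_fun_deriv)
  also have "\<dots> = W_along \<tau> W q p (t + \<tau>) - W_along \<tau> W q p t"
    using DC_W q p extremal by blast
  finally show "(P_expr \<tau> \<alpha>1 \<alpha>2 \<alpha>3 \<alpha>4 H \<xi> \<eta> \<nu> q p (t + \<tau>) - W_along \<tau> W q p (t + \<tau>))
      - (P_expr \<tau> \<alpha>1 \<alpha>2 \<alpha>3 \<alpha>4 H \<xi> \<eta> \<nu> q p t - W_along \<tau> W q p t) = 0"
    by simp
qed

end
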